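(* Let $T$ be a causal theory with explainable symbols $\mathbf{p}$ all of whose rules are D-rules, let $\Pi$ be the conjunction of $\mathrm{tr}_d[R]$ over all rules $R$ of $T$, and let $CC$ be the conjunction of the completeness constraints for $\mathbf{p}$. Then $T\land CC\models\mathrm{SM}_{\mathbf{p}\widehat{\mathbf{p}}}[\Pi\land CC]$.
   Context: A causal theory $T$ consists of a list $\mathbf{p}$ of distinct predicate constants (explainable symbols, not equality) and a finite set of causal rules $F\Leftarrow G$. With predicate variables $u_p$ ($p\in\mathbf{p}$), list $\mathbf{u}$, $T^\dagger(\mathbf{u})$ is the conjunction of $\forall\mathbf{x}(G\to F^{\mathbf{p}}_{\mathbf{u}})$ over the rules ($\mathbf{x}$ the free variables, $F^{\mathbf{p}}_{\mathbf{u}}$ replaces each $p$ by $u_p$), and $T$ is identified with the sentence $\forall\mathbf{u}(T^\dagger(\mathbf{u})\leftrightarrow(\mathbf{u}=\mathbf{p}))$, where $\mathbf{u}=\mathbf{p}$ is $\bigwedge_p\forall\mathbf{x}(u_p(\mathbf{x})\leftrightarrow p(\mathbf{x}))$. A D-rule has the form $\bigvee_{A\in Pos}A\lor\bigvee_{A\in Neg}\neg A\Leftarrow G$ with $Pos,Neg$ finite sets of atoms with predicates in $\mathbf{p}$ and $G$ without $\to$. For $p\in\mathbf{p}$, $\widehat p$ is a new predicate constant of the same arity; for $A=p(\mathbf{t})$, $\widehat A=\widehat p(\mathbf{t})$. $\mathrm{tr}_d$ of the D-rule is $\widetilde\forall\big(\neg\neg G\land\bigwedge_{A\in Pos}(\widehat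 A\lor\neg\widehat A)\land\bigwedge_{A\in Neg}(A\lor\neg A)\to\bigvee_{A\in Pos}A\lor\bigvee_{A\in Neg}\widehat A\big)$ ($\widetilde\forall$ = universal closure). $CC$ is the conjunction over $p\in\mathbf{p}$ of $\forall\mathbf{x}\neg(p(\mathbf{x})\land\widehat p(\mathbf{x}))$ and $\forall\mathbf{x}\neg(\neg p(\mathbf{x})\land\neg\widehat p(\mathbf{x}))$. For a logic program $F$ (conjunction of sentences $\widetilde\forall(F_1\to F_2)$ with no other $\to$), $\mathrm{SM}_{\mathbf{p}\widehat{\mathbf{p}}}[F]$ is $F\land\neg\exists\mathbf{u}\widehat{\mathbf{u}}\big(((\mathbf{u},\widehat{\mathbf{u}})<(\mathbf{p},\widehat{\mathbf{p}}))\land F^\diamond(\mathbf{u},\widehat{\mathbf{u}})\big)$, where $\widehat{\mathbf{u}}=(\widehat u_p)$ are further predicate variables, $F^\diamond$ replaces each occurrence of $p$ / $\widehat p$ not in the scope of $\neg$ by $u_p$ / $\widehat u_p$, $p\le q$ is $\forall\mathbf{x}(p(\mathbf{x})\to q(\mathbf{x}))$ (componentwise for tuples) and $\mathbf{a}<\mathbf{b}$ is $(\mathbf{a}\le\mathbf{b})\land\neg(\mathbf{b}\le\mathbf{a})$. $\models$ is classical (second-order) entailment. *)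

theory Defs
  imports Main
begin

datatype 'f trm = Var nat | Fn 'f "'f trm list"

datatype ('f, 'r) fm =
    Bot
  | Atom 'r "'f trm list"
  | Eq "'f trm" "'f trm"
  | Neg "('f, 'r) fm"
  | Conj "('f, 'r) fm" "('f, 'r) fm"
  | Disj "('f, 'r) fm" "('f, 'r) fm"
  | Imp "('f, 'r) fm" "('f, 'r) fm"
  | Forall nat "('f, 'r) fm"
  | Exists nat "('f, 'r) fm"

primrec fv_trm :: "'f trm \<Rightarrow> nat set" where
  "fv_trm (Var x) = {x}"
| "fv_trm (Fn f ts) = \<Union> (set (map fv_trm ts))"

primrec fv :: "('f, 'r) fm \<Rightarrow> nat set" where
  "fv Bot = {}"
| "fv (Atom r ts) = \<Union> (set (map fv_trm ts))"
| "fv (Eq s t) = fv_trm s \<union> fv_trm t"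
| "fv (Neg F) = fv F"
| "fv (Conj F G) = fv F \<union> fv G"
| "fv (Disj F G) = fv F \<union> fv G"
| "fv (Imp F G) = fv F \<union> fv G"
| "fv (Forall x F) = fv F - {x}"
| "fv (Exists x F) = fv F - {x}"

primrec rename_pred :: "('r \<Rightarrow> 's) \<Rightarrow> ('f, 'r) fm \<Rightarrow> ('f, 's) fm" where
  "rename_pred g Bot = Bot"
| "rename_pred g (Atom r ts) = Atom (g r) ts"
| "rename_pred g (Eq s t) = Eq s t"
| "rename_pred g (Neg F) = Neg (rename_pred g F)"
| "rename_pred g (Conj F G) = Conj (rename_pred g F) (rename_pred g G)"
| "rename_pred g (Disj F G) = Disj (rename_pred g F) (rename_pred g G)"
| "rename_pred g (Imp F G) = Imp (rename_pred g F) (rename_pred g G)"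
| "rename_pred g (Forall x F) = Forall x (rename_pred g F)"
| "rename_pred g (Exists x F) = Exists x (rename_pred g F)"

primrec no_imp :: "('f, 'r) fm \<Rightarrow> bool" where
  "no_imp Bot = True"
| "no_imp (Atom r ts) = True"
| "no_imp (Eq s t) = True"
| "no_imp (Neg F) = no_imp F"
| "no_imp (Conj F G) = (no_imp F \<and> no_imp G)"
| "no_imp (Disj F G) = (no_imp F \<and> no_imp G)"
| "no_imp (Imp F G) = False"
| "no_imp (Forall x F) = no_imp F"
| "no_imp (Exists x F) = no_imp F"

fun conjs :: "('f, 'r) fm list \<Rightarrow> ('f, 'r) fm" where
  "conjs [] = Neg Bot"
| "conjs [F] = F"
| "conjs (F # Fs) = Conj F (conjs Fs)"

fun disjs :: "('f, 'r) fm list \<Rightarrow> ('f, 'r) fm" where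
  "disjs [] = Bot"
| "disjs [F] = F"
| "disjs (F # Fs) = Disj F (disjs Fs)"

definition foralls :: "nat list \<Rightarrow> ('f, 'r) fm \<Rightarrow> ('f, 'r) fm" where
  "foralls xs F = foldr Forall xs F"

definition ucl :: "('f, 'r) fm \<Rightarrow> ('f, 'r) fm" where
  "ucl F = foralls (sorted_list_of_set (fv F)) F"

text \<open>A structure: universe = the type 'a, function interpretation Fi,
  predicate interpretation I (relations as predicates on argument lists);
  sigma is a variable assignment.\<close>

primrec teval :: "('f \<Rightarrow> 'a list \<Rightarrow> 'a) \<Rightarrow> (nat \<Rightarrow> 'a) \<Rightarrow> 'f trm \<Rightarrow> 'a" where
  "teval Fi \<sigma> (Var x) = \<sigma> x"
| "teval Fi \<sigma> (Fn f ts) = Fi f (map (teval Fi \<sigma>) ts)"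

primrec eval :: "('f \<Rightarrow> 'a list \<Rightarrow> 'a) \<Rightarrow> ('r \<Rightarrow> 'a list \<Rightarrow> bool) \<Rightarrow> (nat \<Rightarrow> 'a)
    \<Rightarrow> ('f, 'r) fm \<Rightarrow> bool" where
  "eval Fi I \<sigma> Bot = False"
| "eval Fi I \<sigma> (Atom r ts) = I r (map (teval Fi \<sigma>) ts)"
| "eval Fi I \<sigma> (Eq s t) = (teval Fi \<sigma> s = teval Fi \<sigma> t)"
| "eval Fi I \<sigma> (Neg F) = (\<not> eval Fi I \<sigma> F)"
| "eval Fi I \<sigma> (Conj F G) = (eval Fi I \<sigma> F \<and> eval Fi I \<sigma> G)"
| "eval Fi I \<sigma> (Disj F G) = (eval Fi I \<sigma> F \<or> eval Fi I \<sigma> G)"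
| "eval Fi I \<sigma> (Imp F G) = (eval Fi I \<sigma> F \<longrightarrow> eval Fi I \<sigma> G)"
| "eval Fi I \<sigma> (Forall x F) = (\<forall>d. eval Fi I (\<sigma>(x := d)) F)"
| "eval Fi I \<sigma> (Exists x F) = (\<exists>d. eval Fi I (\<sigma>(x := d)) F)"

definition pred_le :: "('r \<Rightarrow> nat) \<Rightarrow> 'r set \<Rightarrow> ('r \<Rightarrow> 'a list \<Rightarrow> bool)
    \<Rightarrow> ('r \<Rightarrow> 'a list \<Rightarrow> bool) \<Rightarrow> bool" where
  "pred_le ar S U V = (\<forall>r\<in>S. \<forall>xs. length xs = ar r \<longrightarrow> U r xs \<longrightarrow> V r xs)"

definition pred_less :: "('r \<Rightarrow> nat) \<Rightarrow> 'r set \<Rightarrow> ('r \<Rightarrow> 'a list \<Rightarrow> bool)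
    \<Rightarrow> ('r \<Rightarrow> 'a list \<Rightarrow> bool) \<Rightarrow> bool" where
  "pred_less ar S U V = (pred_le ar S U V \<and> \<not> pred_le ar S V U)"

definition pred_eq :: "('r \<Rightarrow> nat) \<Rightarrow> 'r set \<Rightarrow> ('r \<Rightarrow> 'a list \<Rightarrow> bool)
    \<Rightarrow> ('r \<Rightarrow> 'a list \<Rightarrow> bool) \<Rightarrow> bool" where
  "pred_eq ar S U V = (\<forall>r\<in>S. \<forall>xs. length xs = ar r \<longrightarrow> (U r xs \<longleftrightarrow> V r xs))"

text \<open>A causal rule F \<Leftarrow> G is the pair (F, G).  Predicate variables u_p are represented by
  the symbols Inr p (original constants are Inl r).\<close>
type_synonym ('f, 'p) crule = "('f, 'p) fm \<times> ('f, 'p) fm"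

definition Tdag :: "'p list \<Rightarrow> ('f, 'p) crule list \<Rightarrow> ('f, 'p + 'p) fm" where
  "Tdag ps R = conjs (map (\<lambda>(F, G). ucl (Imp (rename_pred Inl G)
       (rename_pred (\<lambda>r. if r \<in> set ps then Inr r else Inl r) F))) R)"

definition causal_holds :: "('p \<Rightarrow> nat) \<Rightarrow> 'p list \<Rightarrow> ('f, 'p) crule list
    \<Rightarrow> ('f \<Rightarrow> 'a list \<Rightarrow> 'a) \<Rightarrow> ('p \<Rightarrow> 'a list \<Rightarrow> bool) \<Rightarrow> (nat \<Rightarrow> 'a) \<Rightarrow> bool" where
  "causal_holds ar ps R Fi I \<sigma> =
     (\<forall>U. eval Fi (case_sum I U) \<sigma> (Tdag ps R) \<longleftrightarrow> pred_eq ar (set ps) U I)"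

text \<open>D-rules: (Pos, Neg, G); atoms are pairs (predicate, argument terms).\<close>
type_synonym ('f, 'p) atm = "'p \<times> 'f trm list"
type_synonym ('f, 'p) drule = "('f, 'p) atm list \<times> ('f, 'p) atm list \<times> ('f, 'p) fm"

definition atom_fm :: "('f, 'p) atm \<Rightarrow> ('f, 'p) fm" where
  "atom_fm a = Atom (fst a) (snd a)"

definition drule_crule :: "('f, 'p) drule \<Rightarrow> ('f, 'p) crule" where
  "drule_crule = (\<lambda>(Pos, Ng, G). (disjs (map atom_fm Pos @ map (\<lambda>a. Neg (atom_fm a)) Ng), G))"

definition is_drule :: "'p list \<Rightarrow> ('p \<Rightarrow> nat) \<Rightarrow> ('f, 'p) drule \<Rightarrow> bool" where
  "is_drule ps ar = (\<lambda>(Pos, Ng, G). no_imp G \<and>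
      (\<forall>a \<in> set Pos \<union> set Ng. fst a \<in> set ps \<and> length (snd a) = ar (fst a)))"

datatype 'p hsym = Orig 'p | Hat 'p

definition har :: "('p \<Rightarrow> nat) \<Rightarrow> 'p hsym \<Rightarrow> nat" where
  "har ar = case_hsym ar ar"

definition oatm :: "('f, 'p) atm \<Rightarrow> ('f, 'p hsym) fm" where
  "oatm a = Atom (Orig (fst a)) (snd a)"

definition hatm :: "('f, 'p) atm \<Rightarrow> ('f, 'p hsym) fm" where
  "hatm a = Atom (Hat (fst a)) (snd a)"

definition tr_d :: "('f, 'p) drule \<Rightarrow> ('f, 'p hsym) fm" where
  "tr_d = (\<lambda>(Pos, Ng, G). ucl (Imp
      (conjs ([Neg (Neg (rename_pred Orig G))]
              @ map (\<lambda>a. Disj (hatm a) (Neg (hatm a))) Pos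
              @ map (\<lambda>a. Disj (oatm a) (Neg (oatm a))) Ng))
      (disjs (map oatm Pos @ map hatm Ng))))"

definition Pi :: "('f, 'p) drule list \<Rightarrow> ('f, 'p hsym) fm" where
  "Pi R = conjs (map tr_d R)"

definition cc_pred :: "('p \<Rightarrow> nat) \<Rightarrow> 'p \<Rightarrow> ('f, 'p hsym) fm" where
  "cc_pred ar p = (let xs = map Var [0..<ar p] in
     Conj (foralls [0..<ar p] (Neg (Conj (Atom (Orig p) xs) (Atom (Hat p) xs))))
          (foralls [0..<ar p] (Neg (Conj (Neg (Atom (Orig p) xs)) (Neg (Atom (Hat p) xs))))))"

definition CC :: "('p \<Rightarrow> nat) \<Rightarrow> 'p list \<Rightarrow> ('f, 'p hsym) fm" where
  "CC ar ps = conjs (map (cc_pred ar) ps)"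

primrec dia :: "'r set \<Rightarrow> ('f, 'r) fm \<Rightarrow> ('f, 'r + 'r) fm" where
  "dia S Bot = Bot"
| "dia S (Atom r ts) = Atom (if r \<in> S then Inr r else Inl r) ts"
| "dia S (Eq s t) = Eq s t"
| "dia S (Neg F) = Neg (rename_pred Inl F)"
| "dia S (Conj F G) = Conj (dia S F) (dia S G)"
| "dia S (Disj F G) = Disj (dia S F) (dia S G)"
| "dia S (Imp F G) = Imp (dia S F) (dia S G)"
| "dia S (Forall x F) = Forall x (dia S F)"
| "dia S (Exists x F) = Exists x (dia S F)"

definition SM_holds :: "('r \<Rightarrow> nat) \<Rightarrow> 'r set \<Rightarrow> ('f \<Rightarrow> 'a list \<Rightarrow> 'a)
    \<Rightarrow> ('r \<Rightarrow> 'a list \<Rightarrow> bool) \<Rightarrow> (nat \<Rightarrow> 'a) \<Rightarrow> ('f, 'r) fm \<Rightarrow> bool" where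
  "SM_holds ar S Fi I \<sigma> F =
     (eval Fi I \<sigma> F \<and> \<not> (\<exists>U. pred_less ar S U I \<and> eval Fi (case_sum I U) \<sigma> (dia S F)))"

end

theory Submission
  imports Defs
begin

text \<open>Under the completeness constraints \<open>p^\<close> is the complement of \<open>p\<close>, so \<open>tr\<^sub>d\<close> of a D-rule
  says exactly what the rule's conjunct of \<open>T\<^sup>\<dagger>(p)\<close> says, and \<open>T\<close> gives \<open>\<Pi>\<close>.
  For minimality, let \<open>(u, u^) < (p, p^)\<close> satisfy \<open>\<Pi>\<^sup>\<diamond>\<close>. Then
  \<open>v = u \<or> (\<not>p \<and> \<not>u^)\<close> satisfies \<open>T\<^sup>\<dagger>(v)\<close>: if some rule failed for \<open>v\<close>, the premises
  of its \<open>\<Pi>\<^sup>\<diamond>\<close>-conjunct would hold, and its conclusion contradicts \<open>u \<le> p\<close>,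
  \<open>u^ \<le> p^ = \<not>p\<close>. By \<open>T\<close>, \<open>v = p\<close>, which forces \<open>p \<le> u\<close> and \<open>p^ \<le> u^\<close>.\<close>

lemma teval_cong: "(\<forall>v\<in>fv_trm t. \<sigma> v = \<sigma>' v) \<Longrightarrow> teval Fi \<sigma> t = teval Fi \<sigma>' t"
  by (induction t) (auto cong: map_cong)

lemma eval_cong: "(\<forall>v\<in>fv F. \<sigma> v = \<sigma>' v) \<Longrightarrow> eval Fi I \<sigma> F = eval Fi I \<sigma>' F"
proof (induction F arbitrary: \<sigma> \<sigma>')
  case (Atom r ts)
  then show ?case by (auto intro!: arg_cong[where f="I r"] map_cong teval_cong)
next
  case (Eq s t)
  then show ?case using teval_cong[of s \<sigma> \<sigma>' Fi] teval_cong[of t \<sigma> \<sigma>' Fi] by auto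
next
  case (Forall x F)
  then have "eval Fi I (\<sigma>(x:=d)) F = eval Fi I (\<sigma>'(x:=d)) F" for d by auto
  then show ?case by simp
next
  case (Exists x F)
  then have "eval Fi I (\<sigma>(x:=d)) F = eval Fi I (\<sigma>'(x:=d)) F" for d by auto
  then show ?case by simp
qed (auto simp: ball_Un)

lemma eval_foralls:
  "eval Fi I \<sigma> (foralls xs F) \<longleftrightarrow> (\<forall>\<sigma>'. (\<forall>v. v \<notin> set xs \<longrightarrow> \<sigma>' v = \<sigma> v) \<longrightarrow> eval Fi I \<sigma>' F)"
proof (induction xs arbitrary: \<sigma>)
  case Nil
  then show ?case by (auto simp: foralls_def)
next
  case (Cons x xs)
  have "eval Fi I \<sigma> (foralls (x # xs) F) = (\<forall>d. eval Fi I (\<sigma>(x:=d)) (foralls xs F))"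
    by (simp add: foralls_def)
  also have "\<dots> \<longleftrightarrow> (\<forall>d \<sigma>'. (\<forall>v. v \<notin> set xs \<longrightarrow> \<sigma>' v = (\<sigma>(x:=d)) v) \<longrightarrow> eval Fi I \<sigma>' F)"
    using Cons.IH by blast
  also have "\<dots> \<longleftrightarrow> (\<forall>\<sigma>'. (\<forall>v. v \<notin> set (x # xs) \<longrightarrow> \<sigma>' v = \<sigma> v) \<longrightarrow> eval Fi I \<sigma>' F)"
  proof (intro iffI allI impI)
    fix \<sigma>' assume "\<forall>v. v \<notin> set (x # xs) \<longrightarrow> \<sigma>' v = \<sigma> v"
      and "\<forall>d \<sigma>'. (\<forall>v. v \<notin> set xs \<longrightarrow> \<sigma>' v = (\<sigma>(x:=d)) v) \<longrightarrow> eval Fi I \<sigma>' F"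
    then show "eval Fi I \<sigma>' F" by (metis fun_upd_apply list.set_intros(1) set_ConsD)
  qed auto
  finally show ?case .
qed

lemma finite_fv: "finite (fv F)"
proof -
  have "finite (fv_trm t)" for t :: "'f trm" by (induction t) auto
  then show ?thesis by (induction F) auto
qed

lemma eval_ucl: "eval Fi I \<sigma> (ucl F) \<longleftrightarrow> (\<forall>\<sigma>'. eval Fi I \<sigma>' F)"
proof -
  have "eval Fi I \<sigma>' F" if "\<forall>\<tau>. (\<forall>v. v \<notin> fv F \<longrightarrow> \<tau> v = \<sigma> v) \<longrightarrow> eval Fi I \<tau> F" for \<sigma>'
  proof -
    let ?\<tau> = "\<lambda>v. if v \<in> fv F then \<sigma>' v else \<sigma> v"
    have "eval Fi I ?\<tau> F" using that by auto
    then show ?thesis by (subst eval_cong[of F \<sigma>' ?\<tau>]) auto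
  qed
  then show ?thesis by (auto simp: ucl_def eval_foralls finite_fv)
qed

lemma eval_conjs: "eval Fi I \<sigma> (conjs Fs) \<longleftrightarrow> (\<forall>F\<in>set Fs. eval Fi I \<sigma> F)"
  by (induction Fs rule: conjs.induct) auto

lemma eval_disjs: "eval Fi I \<sigma> (disjs Fs) \<longleftrightarrow> (\<exists>F\<in>set Fs. eval Fi I \<sigma> F)"
  by (induction Fs rule: disjs.induct) auto

lemma eval_rename_pred: "eval Fi I \<sigma> (rename_pred g F) = eval Fi (I \<circ> g) \<sigma> F"
  by (induction F arbitrary: \<sigma>) auto

lemma fv_rename_pred: "fv (rename_pred g F) = fv F"
  by (induction F) auto

lemma fv_dia: "fv (dia S F) = fv F"
  by (induction F) (auto simp: fv_rename_pred)

lemma dia_conjs: "dia S (conjs Fs) = conjs (map (dia S) Fs)"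
  by (induction Fs rule: conjs.induct) auto

lemma dia_disjs: "dia S (disjs Fs) = disjs (map (dia S) Fs)"
  by (induction Fs rule: disjs.induct) auto

lemma dia_ucl: "dia S (ucl F) = ucl (dia S F)"
proof -
  have "dia S (foldr Forall xs F) = foldr Forall xs (dia S F)" for xs by (induction xs) auto
  then show ?thesis by (simp add: ucl_def foralls_def fv_dia)
qed

lemma eval_dia_case_sum_same: "eval Fi (case_sum I I) \<sigma> (dia S F) = eval Fi I \<sigma> F"
proof -
  have "case_sum I I \<circ> Inl = I" by auto
  then show ?thesis by (induction F arbitrary: \<sigma>) (auto simp: eval_rename_pred)
qed

definition atm_holds :: "('f \<Rightarrow> 'a list \<Rightarrow> 'a) \<Rightarrow> ('p \<Rightarrow> 'a list \<Rightarrow> bool) \<Rightarrow> (nat \<Rightarrow> 'a)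
    \<Rightarrow> ('f, 'p) atm \<Rightarrow> bool" where
  "atm_holds Fi U \<sigma> a \<longleftrightarrow> U (fst a) (map (teval Fi \<sigma>) (snd a))"

text \<open>The conjunct of \<open>T\<^sup>\<dagger>(u)\<close> contributed by a D-rule, with the body read in \<open>J\<close> and
  \<open>u\<close> interpreted by \<open>U\<close>.\<close>
definition drule_dag :: "('f \<Rightarrow> 'a list \<Rightarrow> 'a) \<Rightarrow> ('p \<Rightarrow> 'a list \<Rightarrow> bool) \<Rightarrow> ('p \<Rightarrow> 'a list \<Rightarrow> bool)
    \<Rightarrow> ('f, 'p) drule \<Rightarrow> bool" where
  "drule_dag Fi J U = (\<lambda>(Pos, Ng, G). \<forall>\<sigma>. eval Fi J \<sigma> G \<longrightarrow>
     (\<exists>a\<in>set Pos. atm_holds Fi U \<sigma> a) \<or> (\<exists>a\<in>set Ng. \<not> atm_holds Fi U \<sigma> a))"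

lemma eval_dag_drule_crule:
  assumes "is_drule ps ar r"
  shows "eval Fi (case_sum J U) \<sigma> ((\<lambda>(F, G). ucl (Imp (rename_pred Inl G)
       (rename_pred (\<lambda>r. if r \<in> set ps then Inr r else Inl r) F))) (drule_crule r))
    \<longleftrightarrow> drule_dag Fi J U r"
proof -
  obtain Pos Ng G where r: "r = (Pos, Ng, G)" by (cases r)
  have "case_sum J U \<circ> Inl = J" by auto
  moreover have "fst a \<in> set ps" if "a \<in> set Pos \<union> set Ng" for a
    using assms that r by (auto simp: is_drule_def)
  ultimately show ?thesis
    by (simp add: r drule_crule_def drule_dag_def atm_holds_def atom_fm_def eval_ucl
        eval_rename_pred eval_disjs bex_Un cong: rev_conj_cong)
qed

lemma eval_Tdag_drules:
  assumes "\<forall>r\<in>set R. is_drule ps ar r"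
  shows "eval Fi (case_sum J U) \<sigma> (Tdag ps (map drule_crule R)) \<longleftrightarrow> (\<forall>r\<in>set R. drule_dag Fi J U r)"
  unfolding Tdag_def eval_conjs set_map ball_simps
proof (rule ball_cong[OF refl])
  fix r assume "r \<in> set R"
  with assms show "eval Fi (case_sum J U) \<sigma> ((\<lambda>(F, G). ucl (Imp (rename_pred Inl G)
       (rename_pred (\<lambda>r. if r \<in> set ps then Inr r else Inl r) F))) (drule_crule r))
    \<longleftrightarrow> drule_dag Fi J U r"
    by (intro eval_dag_drule_crule) blast
qed

lemma causal_holds_drules_iff:
  assumes "\<forall>r\<in>set R. is_drule ps ar r"
  shows "causal_holds ar ps (map drule_crule R) Fi J \<sigma> \<longleftrightarrow>
    (\<forall>U. (\<forall>r\<in>set R. drule_dag Fi J U r) \<longleftrightarrow> pred_eq ar (set ps) U J)"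
  by (simp add: causal_holds_def eval_Tdag_drules[OF assms])

lemma eval_foralls_upt:
  "eval Fi I \<sigma> (foralls [0..<n] F) \<longleftrightarrow>
    (\<forall>xs. length xs = n \<longrightarrow> eval Fi I (\<lambda>i. if i < n then xs ! i else \<sigma> i) F)"
  unfolding eval_foralls
proof (intro iffI allI impI)
  fix \<sigma>' assume "\<forall>v. v \<notin> set [0..<n] \<longrightarrow> \<sigma>' v = \<sigma> v"
  then have "\<sigma>' = (\<lambda>i. if i < n then map \<sigma>' [0..<n] ! i else \<sigma> i)" by auto
  moreover assume "\<forall>xs. length xs = n \<longrightarrow> eval Fi I (\<lambda>i. if i < n then xs ! i else \<sigma> i) F"
  ultimately show "eval Fi I \<sigma>' F" by (metis length_map length_upt minus_nat.diff_0)
qed auto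

lemma eval_CC_iff:
  "eval Fi I \<sigma> (CC ar ps) \<longleftrightarrow> (\<forall>p\<in>set ps. \<forall>xs. length xs = ar p \<longrightarrow> (I (Hat p) xs \<longleftrightarrow> \<not> I (Orig p) xs))"
proof -
  have "map (teval Fi (\<lambda>i. if i < ar p then xs ! i else \<sigma> i)) (map Var [0..<ar p]) = xs"
    if "length xs = ar p" for p xs
    using that by (auto intro!: nth_equalityI)
  then have "eval Fi I \<sigma> (cc_pred ar p) \<longleftrightarrow> (\<forall>xs. length xs = ar p \<longrightarrow> (I (Hat p) xs \<longleftrightarrow> \<not> I (Orig p) xs))" for p
    unfolding cc_pred_def Let_def eval.simps eval_foralls_upt by auto
  then show ?thesis by (simp add: CC_def eval_conjs)
qed

lemma eval_dia_tr_d: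
  assumes "is_drule ps ar (Pos, Ng, G)"
  shows "eval Fi (case_sum I U) \<sigma> (dia (Orig ` set ps \<union> Hat ` set ps) (tr_d (Pos, Ng, G))) \<longleftrightarrow>
    (\<forall>\<sigma>'. eval Fi (I \<circ> Orig) \<sigma>' G \<longrightarrow>
      (\<forall>a\<in>set Pos. atm_holds Fi (I \<circ> Hat) \<sigma>' a \<longrightarrow> atm_holds Fi (U \<circ> Hat) \<sigma>' a) \<longrightarrow>
      (\<forall>a\<in>set Ng. atm_holds Fi (I \<circ> Orig) \<sigma>' a \<longrightarrow> atm_holds Fi (U \<circ> Orig) \<sigma>' a) \<longrightarrow>
      (\<exists>a\<in>set Pos. atm_holds Fi (U \<circ> Orig) \<sigma>' a) \<or> (\<exists>a\<in>set Ng. atm_holds Fi (U \<circ> Hat) \<sigma>' a))"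
proof -
  have "case_sum I U \<circ> Inl = I" by auto
  moreover have "fst a \<in> set ps" if "a \<in> set Pos \<union> set Ng" for a
    using assms that by (auto simp: is_drule_def)
  ultimately show ?thesis
    by (simp add: tr_d_def dia_ucl dia_conjs dia_disjs eval_ucl eval_conjs eval_disjs eval_rename_pred
        hatm_def oatm_def atm_holds_def ball_Un bex_Un comp_assoc[symmetric] cong: rev_conj_cong)
      blast
qed

lemma eval_tr_d_if_drule_dag:
  assumes "is_drule ps ar r"
    and compl: "\<forall>p\<in>set ps. \<forall>xs. length xs = ar p \<longrightarrow> (I (Hat p) xs \<longleftrightarrow> \<not> I (Orig p) xs)"
    and "drule_dag Fi (I \<circ> Orig) (I \<circ> Orig) r"
  shows "eval Fi I \<sigma> (tr_d r)"
proof -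
  obtain Pos Ng G where r: "r = (Pos, Ng, G)" by (cases r)
  have "atm_holds Fi (I \<circ> Hat) \<sigma>' a \<longleftrightarrow> \<not> atm_holds Fi (I \<circ> Orig) \<sigma>' a" if "a \<in> set Ng" for \<sigma>' a
    using assms(1) compl that by (auto simp: r is_drule_def atm_holds_def)
  then have "eval Fi (case_sum I I) \<sigma> (dia (Orig ` set ps \<union> Hat ` set ps) (tr_d r))"
    using assms(1,3) by (simp add: r eval_dia_tr_d drule_dag_def)
  then show ?thesis by (simp add: eval_dia_case_sum_same)
qed

text \<open>Folds a pair \<open>(u, u^) \<le> (p, p^)\<close> into a single candidate for \<open>u\<close> in \<open>T\<^sup>\<dagger>\<close>; under
  the completeness constraints it equals \<open>p\<close> only if \<open>(u, u^) = (p, p^)\<close>.\<close>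
definition fold_hat :: "('p hsym \<Rightarrow> 'a list \<Rightarrow> bool) \<Rightarrow> ('p hsym \<Rightarrow> 'a list \<Rightarrow> bool) \<Rightarrow> 'p \<Rightarrow> 'a list \<Rightarrow> bool"
  where "fold_hat I U p xs \<longleftrightarrow> U (Orig p) xs \<or> \<not> I (Orig p) xs \<and> \<not> U (Hat p) xs"

lemma drule_dag_fold_hat:
  assumes "is_drule ps ar r"
    and compl: "\<forall>p\<in>set ps. \<forall>xs. length xs = ar p \<longrightarrow> (I (Hat p) xs \<longleftrightarrow> \<not> I (Orig p) xs)"
    and le: "pred_le (har ar) (Orig ` set ps \<union> Hat ` set ps) U I"
    and "eval Fi (case_sum I U) \<sigma> (dia (Orig ` set ps \<union> Hat ` set ps) (tr_d r))"
  shows "drule_dag Fi (I \<circ> Orig) (fold_hat I U) r"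
proof -
  obtain Pos Ng G where r: "r = (Pos, Ng, G)" by (cases r)
  have atm: "(atm_holds Fi (I \<circ> Hat) \<sigma>' a \<longleftrightarrow> \<not> atm_holds Fi (I \<circ> Orig) \<sigma>' a) \<and>
      (atm_holds Fi (U \<circ> Orig) \<sigma>' a \<longrightarrow> atm_holds Fi (I \<circ> Orig) \<sigma>' a) \<and>
      (atm_holds Fi (U \<circ> Hat) \<sigma>' a \<longrightarrow> atm_holds Fi (I \<circ> Hat) \<sigma>' a)"
    if "a \<in> set Pos \<union> set Ng" for \<sigma>' a
    using assms(1) compl le that
    by (auto simp: r is_drule_def atm_holds_def pred_le_def har_def)
  have "atm_holds Fi (fold_hat I U) \<sigma>' a \<longleftrightarrow>
      atm_holds Fi (U \<circ> Orig) \<sigma>' a \<or> \<not> atm_holds Fi (I \<circ> Orig) \<sigma>' a \<and> \<not> atm_holds Fi (U \<circ> Hat) \<sigma>' a"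
    for \<sigma>' a by (simp add: atm_holds_def fold_hat_def)
  with atm assms(1,4) show ?thesis
    by (simp add: r eval_dia_tr_d drule_dag_def) metis
qed

lemma pred_le_of_fold_hat_eq:
  assumes compl: "\<forall>p\<in>set ps. \<forall>xs. length xs = ar p \<longrightarrow> (I (Hat p) xs \<longleftrightarrow> \<not> I (Orig p) xs)"
    and "pred_eq ar (set ps) (fold_hat I U) (I \<circ> Orig)"
  shows "pred_le (har ar) (Orig ` set ps \<union> Hat ` set ps) I U"
  using assms unfolding pred_le_def pred_eq_def fold_hat_def har_def by fastforce

theorem lemma8:
  fixes ps :: "'p list" and ar :: "'p \<Rightarrow> nat" and R :: "('f, 'p) drule list"
    and Fi :: "'f \<Rightarrow> 'a list \<Rightarrow> 'a" and I :: "'p hsym \<Rightarrow> 'a list \<Rightarrow> bool"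
    and \<sigma> :: "nat \<Rightarrow> 'a"
  assumes "distinct ps"
    and "\<forall>r \<in> set R. is_drule ps ar r"
    and "causal_holds ar ps (map drule_crule R) Fi (I \<circ> Orig) \<sigma>"
    and "eval Fi I \<sigma> (CC ar ps)"
  shows "SM_holds (har ar) (Orig ` set ps \<union> Hat ` set ps) Fi I \<sigma> (Conj (Pi R) (CC ar ps))"
proof -
  let ?S = "Orig ` set ps \<union> Hat ` set ps"
  have compl: "\<forall>p\<in>set ps. \<forall>xs. length xs = ar p \<longrightarrow> (I (Hat p) xs \<longleftrightarrow> \<not> I (Orig p) xs)"
    using assms(4) by (simp add: eval_CC_iff)
  have T: "(\<forall>r\<in>set R. drule_dag Fi (I \<circ> Orig) U r) \<longleftrightarrow> pred_eq ar (set ps) U (I \<circ> Orig)" for U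
    using assms(3) causal_holds_drules_iff[OF assms(2)] by blast
  have "eval Fi I \<sigma> (Pi R)"
    unfolding Pi_def eval_conjs
  proof
    fix F assume "F \<in> set (map tr_d R)"
    then obtain r where r: "r \<in> set R" "F = tr_d r" by auto
    have "drule_dag Fi (I \<circ> Orig) (I \<circ> Orig) r" using T[of "I \<circ> Orig"] r(1) by (simp add: pred_eq_def)
    with r assms(2) show "eval Fi I \<sigma> F" using eval_tr_d_if_drule_dag[OF _ compl] by blast
  qed
  moreover have False
    if less: "pred_less (har ar) ?S U I" and "eval Fi (case_sum I U) \<sigma> (dia ?S (Conj (Pi R) (CC ar ps)))"
    for U
  proof -
    have "\<forall>r\<in>set R. eval Fi (case_sum I U) \<sigma> (dia ?S (tr_d r))"
      using that(2) by (simp add: Pi_def dia_conjs eval_conjs)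
    then have "\<forall>r\<in>set R. drule_dag Fi (I \<circ> Orig) (fold_hat I U) r"
      using assms(2) less drule_dag_fold_hat[OF _ compl] unfolding pred_less_def by blast
    then have "pred_le (har ar) ?S I U"
      using T compl pred_le_of_fold_hat_eq by blast
    with less show False by (simp add: pred_less_def)
  qed
  ultimately show ?thesis using assms(4) by (auto simp: SM_holds_def)
qed

end
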